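(* Let $G\le\mathrm{Aut}(\mathcal{T}_d)$ be any self-similar group. Then every non-trivial element of the Röver–Nekrashevych group $V_d(G)$ has infinitely many $[F_d,F_d]$-conjugates; equivalently, the inclusion $L([F_d,F_d])\subseteq L(V_d(G))$ is irreducible.
   Context: Fix $d\ge2$. $\mathcal{T}_d$ is the infinite rooted $d$-regular tree with vertex set $\{1,\dots,d\}^*$ (finite words, root the empty word), $w$ adjacent to $wi$. Every automorphism permutes the level-1 vertices, giving $\rho:\mathrm{Aut}(\mathcal{T}_d)\to S_d$. Let $\mathcal{T}_d(i)$ be the subtree spanned by words $iw$ and $\delta_i:\mathcal{T}_d\to\mathcal{T}_d(i)$, $w\mapsto iw$. For $g\in\mathrm{Aut}(\mathcal{T}_d)$ put $\phi_i(g)=\delta^{-1}_{\rho(g)i}\circ g|_{\mathcal{T}_d(i)}\circ\delta_i$. $G\le\mathrm{Aut}(\mathcal{T}_d)$ is self-similar if $\phi_i(G)\subseteq G$ for all $i$. Let $C_d=\{1,\dots,d\}^{\mathbb{N}}$ (the boundary of $\mathcal{T}_d$, on which $\mathrm{Aut}(\mathcal{T}_d)$ acts), and for $w\in\{1,\dots,d\}^*$ let $C_d(w)=\{w\kappa:\kappa\in C_d\}$ with homeomorphism $h_w:C_d\to C_d(w)$, $\kappa\mapsto w\kappa$. $V_d(G)$ is the group of homeomorphisms of $C_d$ obtained by choosing two partitions of $C_d$ into the same number $n$ of cones $C_d(w_1^+),\dots,C_d(w_n^+)$ and $C_d(w_1^-),\dots,C_d(w_n^-)$, a bijection $i\mapsto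 j(i)$, and $g_1,\dots,g_n\in G$, and mapping $C_d(w_i^+)$ to $C_d(w_{j(i)}^-)$ via $h_{w_{j(i)}^-}\circ g_i\circ h_{w_i^+}^{-1}$. $F_d\le V_d(G)$ is the subgroup of such homeomorphisms with all $g_i=1$ that preserve the lexicographic order of $C_d$ (the Higman–Thompson group $F_d$), and $[F_d,F_d]$ its commutator subgroup. An inclusion $N\subseteq M$ of von Neumann algebras is irreducible if $N'\cap M\subseteq N$. $L(G)$ is the group von Neumann algebra. *)

theory Defs
  imports "HOL-Algebra.Bij" "HOL-Algebra.Solvable_Groups"
begin

text \<open>Vertices of the rooted d-regular tree: finite words over {1..d}.
  The child of w by letter i is w @ [i]; the word "i w" is i # w.\<close>

definition words :: "nat \<Rightarrow> nat list set" where
  "words d = {w. set w \<subseteq> {1..d}}"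

definition tree_adj :: "nat \<Rightarrow> nat list \<Rightarrow> nat list \<Rightarrow> bool" where
  "tree_adj d u v \<longleftrightarrow> (\<exists>i\<in>{1..d}. v = u @ [i] \<or> u = v @ [i])"

definition AutT :: "nat \<Rightarrow> (nat list \<Rightarrow> nat list) monoid" where
  "AutT d = (BijGroup (words d))
     \<lparr>carrier := {g \<in> Bij (words d).
        \<forall>u\<in>words d. \<forall>v\<in>words d. tree_adj d u v \<longleftrightarrow> tree_adj d (g u) (g v)}\<rparr>"

text \<open>phi_i(g) = delta_{rho(g) i}^{-1} o g|_{T(i)} o delta_i: w \<mapsto> tail of g(i w).\<close>

definition sect :: "nat \<Rightarrow> nat \<Rightarrow> (nat list \<Rightarrow> nat list) \<Rightarrow> (nat list \<Rightarrow> nat list)" where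
  "sect d i g = (\<lambda>w\<in>words d. tl (g (i # w)))"

definition self_similar :: "nat \<Rightarrow> (nat list \<Rightarrow> nat list) set \<Rightarrow> bool" where
  "self_similar d G \<longleftrightarrow> subgroup G (AutT d) \<and> (\<forall>g\<in>G. \<forall>i\<in>{1..d}. sect d i g \<in> G)"

definition bdry :: "nat \<Rightarrow> (nat \<Rightarrow> nat) set" where
  "bdry d = {\<kappa>. \<forall>n. \<kappa> n \<in> {1..d}}"

definition bact :: "(nat list \<Rightarrow> nat list) \<Rightarrow> (nat \<Rightarrow> nat) \<Rightarrow> (nat \<Rightarrow> nat)" where
  "bact g \<kappa> = (\<lambda>n. g (map \<kappa> [0..<Suc n]) ! n)"

definition cone :: "nat \<Rightarrow> nat list \<Rightarrow> (nat \<Rightarrow> nat) set" where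
  "cone d w = {\<kappa> \<in> bdry d. map \<kappa> [0..<length w] = w}"

definition hcone :: "nat list \<Rightarrow> (nat \<Rightarrow> nat) \<Rightarrow> (nat \<Rightarrow> nat)" where
  "hcone w \<kappa> = (\<lambda>n. if n < length w then w ! n else \<kappa> (n - length w))"

definition cone_partition :: "nat \<Rightarrow> nat \<Rightarrow> (nat \<Rightarrow> nat list) \<Rightarrow> bool" where
  "cone_partition d n ws \<longleftrightarrow>
     (\<forall>i<n. ws i \<in> words d) \<and>
     (\<forall>i<n. \<forall>j<n. i \<noteq> j \<longrightarrow> cone d (ws i) \<inter> cone d (ws j) = {}) \<and>
     (\<Union>i<n. cone d (ws i)) = bdry d"

abbreviation BdryGroup :: "nat \<Rightarrow> ((nat \<Rightarrow> nat) \<Rightarrow> (nat \<Rightarrow> nat)) monoid" where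
  "BdryGroup d \<equiv> BijGroup (bdry d)"

definition VdG :: "nat \<Rightarrow> (nat list \<Rightarrow> nat list) set \<Rightarrow> ((nat \<Rightarrow> nat) \<Rightarrow> (nat \<Rightarrow> nat)) set" where
  "VdG d G = {f \<in> Bij (bdry d). \<exists>n wp wm j g.
      cone_partition d n wp \<and> cone_partition d n wm \<and>
      bij_betw j {..<n} {..<n} \<and> (\<forall>i<n. g i \<in> G) \<and>
      (\<forall>i<n. \<forall>\<kappa>\<in>bdry d. f (hcone (wp i) \<kappa>) = hcone (wm (j i)) (bact (g i) \<kappa>))}"

definition lex_less :: "(nat \<Rightarrow> nat) \<Rightarrow> (nat \<Rightarrow> nat) \<Rightarrow> bool" where
  "lex_less \<kappa> \<mu> \<longleftrightarrow> (\<exists>n. (\<forall>m<n. \<kappa> m = \<mu> m) \<and> \<kappa> n < \<mu> n)"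

definition Fd :: "nat \<Rightarrow> ((nat \<Rightarrow> nat) \<Rightarrow> (nat \<Rightarrow> nat)) set" where
  "Fd d = {f \<in> VdG d {\<one>\<^bsub>AutT d\<^esub>}.
      \<forall>\<kappa>\<in>bdry d. \<forall>\<mu>\<in>bdry d. lex_less \<kappa> \<mu> \<longrightarrow> lex_less (f \<kappa>) (f \<mu>)}"

end

theory Submission
  imports Defs
begin

text \<open>A non-trivial \<open>x \<in> V\<^sub>d(G)\<close> acts on each cone of a finite partition by a change of prefix
  followed by a tree automorphism. Each output letter therefore depends on finitely many input
  letters, and since \<open>x\<close> moves some point it maps a whole cone \<open>C(w)\<close> off itself. On bijections
  \<open>c\<close> supported in \<open>C(w)\<close> the map \<open>c \<mapsto> c x c\<inverse>\<close> is injective, because \<open>c x c\<inverse>\<close>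
  agrees with \<open>x c\<inverse>\<close> on \<open>C(w)\<close>. Finally, for every word \<open>u\<close> the commutator of the copies
  of the generator \<open>x\<^sub>0\<close> of \<open>F\<^sub>d\<close> acting in \<open>C(u)\<close> and in \<open>C(u1)\<close> lies in
  \<open>[F\<^sub>d, F\<^sub>d]\<close>, is supported in \<open>C(u)\<close> and is non-trivial. The pairwise disjoint cones
  \<open>C(w 1\<^sup>k 2)\<close> thus give infinitely many distinct elements of \<open>[F\<^sub>d, F\<^sub>d]\<close> supported in
  \<open>C(w)\<close>, hence infinitely many conjugates of \<open>x\<close>.\<close>

section \<open>Boundary sequences and cones\<close>

definition scons :: "nat \<Rightarrow> (nat \<Rightarrow> nat) \<Rightarrow> nat \<Rightarrow> nat" where
  "scons a \<alpha> = (\<lambda>n. if n = 0 then a else \<alpha> (n - 1))"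

definition stl :: "(nat \<Rightarrow> nat) \<Rightarrow> nat \<Rightarrow> nat" where
  "stl \<kappa> = (\<lambda>n. \<kappa> (Suc n))"

definition sdrop :: "nat \<Rightarrow> (nat \<Rightarrow> nat) \<Rightarrow> nat \<Rightarrow> nat" where
  "sdrop m \<kappa> = (\<lambda>n. \<kappa> (n + m))"

lemma scons_0 [simp]: "scons a \<alpha> 0 = a"
  by (simp add: scons_def)

lemma scons_Suc [simp]: "scons a \<alpha> (Suc n) = \<alpha> n"
  by (simp add: scons_def)

lemma stl_scons [simp]: "stl (scons a \<alpha>) = \<alpha>"
  by (simp add: stl_def scons_def)

lemma scons_stl: "scons (\<kappa> 0) (stl \<kappa>) = \<kappa>"
  by (rule ext) (simp add: scons_def stl_def)

lemma scons_in_bdry_iff: "scons a \<alpha> \<in> bdry d \<longleftrightarrow> a \<in> {1..d} \<and> \<alpha> \<in> bdry d"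
proof
  assume "scons a \<alpha> \<in> bdry d"
  then have "scons a \<alpha> 0 \<in> {1..d}" "\<And>n. scons a \<alpha> (Suc n) \<in> {1..d}"
    unfolding bdry_def by blast+
  then show "a \<in> {1..d} \<and> \<alpha> \<in> bdry d" by (simp add: bdry_def)
qed (auto simp: bdry_def scons_def)

lemma stl_in_bdry: "\<kappa> \<in> bdry d \<Longrightarrow> stl \<kappa> \<in> bdry d"
  by (simp add: bdry_def stl_def)

lemma sdrop_in_bdry: "\<kappa> \<in> bdry d \<Longrightarrow> sdrop m \<kappa> \<in> bdry d"
  by (simp add: bdry_def sdrop_def)

lemma Cons_in_words_iff: "a # w \<in> words d \<longleftrightarrow> a \<in> {1..d} \<and> w \<in> words d"
  by (auto simp: words_def)

lemma append_in_words_iff: "u @ w \<in> words d \<longleftrightarrow> u \<in> words d \<and> w \<in> words d"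
  by (auto simp: words_def)

lemma hcone_Nil [simp]: "hcone [] \<rho> = \<rho>"
  by (simp add: hcone_def)

lemma hcone_Cons: "hcone (a # w) \<rho> = scons a (hcone w \<rho>)"
  by (rule ext) (auto simp: hcone_def scons_def nth_Cons')

lemma hcone_append: "hcone (u @ v) \<rho> = hcone u (hcone v \<rho>)"
  by (induction u) (simp_all add: hcone_Cons)

lemma sdrop_hcone [simp]: "sdrop (length w) (hcone w \<rho>) = \<rho>"
  by (rule ext) (simp add: hcone_def sdrop_def)

lemma hcone_inj: "hcone w \<rho> = hcone w \<rho>' \<Longrightarrow> \<rho> = \<rho>'"
  by (metis sdrop_hcone)

lemma hcone_in_bdry: "w \<in> words d \<Longrightarrow> \<rho> \<in> bdry d \<Longrightarrow> hcone w \<rho> \<in> bdry d"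
  by (induction w) (auto simp: hcone_Cons scons_in_bdry_iff Cons_in_words_iff)

lemma mem_cone_iff: "\<kappa> \<in> cone d w \<longleftrightarrow> \<kappa> \<in> bdry d \<and> (\<forall>n<length w. \<kappa> n = w ! n)"
  unfolding cone_def list_eq_iff_nth_eq by auto

lemma cone_Nil [simp]: "cone d [] = bdry d"
  by (auto simp: mem_cone_iff)

lemma mem_cone_Cons_iff: "\<kappa> \<in> cone d (a # w) \<longleftrightarrow> \<kappa> \<in> bdry d \<and> \<kappa> 0 = a \<and> stl \<kappa> \<in> cone d w"
  using stl_in_bdry by (auto simp: mem_cone_iff All_less_Suc2 stl_def)

lemma cone_subset_bdry: "cone d w \<subseteq> bdry d"
  by (auto simp: cone_def)

lemma cone_append_subset: "cone d (u @ v) \<subseteq> cone d u"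
  by (auto simp: mem_cone_iff nth_append)

lemma cone_disjoint_if_nth_neq:
  "i < length u \<Longrightarrow> i < length v \<Longrightarrow> u ! i \<noteq> v ! i \<Longrightarrow> cone d u \<inter> cone d v = {}"
  by (auto simp: mem_cone_iff) metis

lemma hcone_in_cone: "w \<in> words d \<Longrightarrow> \<rho> \<in> bdry d \<Longrightarrow> hcone w \<rho> \<in> cone d w"
  by (simp add: mem_cone_iff hcone_in_bdry) (simp add: hcone_def)

lemma hcone_sdrop: "\<kappa> \<in> cone d w \<Longrightarrow> hcone w (sdrop (length w) \<kappa>) = \<kappa>"
  by (rule ext) (simp add: mem_cone_iff hcone_def sdrop_def)

lemma lex_less_scons_iff:
  "lex_less (scons a \<alpha>) (scons b \<beta>) \<longleftrightarrow> a < b \<or> (a = b \<and> lex_less \<alpha> \<beta>)"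
proof
  assume "lex_less (scons a \<alpha>) (scons b \<beta>)"
  then obtain n where n: "\<forall>m<n. scons a \<alpha> m = scons b \<beta> m" "scons a \<alpha> n < scons b \<beta> n"
    unfolding lex_less_def by blast
  show "a < b \<or> (a = b \<and> lex_less \<alpha> \<beta>)"
  proof (cases n)
    case (Suc k)
    then have "a = b" using n(1) by (metis scons_0 zero_less_Suc)
    moreover have "lex_less \<alpha> \<beta>"
      unfolding lex_less_def using n Suc by (metis Suc_mono scons_Suc)
    ultimately show ?thesis by simp
  qed (use n in simp)
next
  assume "a < b \<or> (a = b \<and> lex_less \<alpha> \<beta>)"
  then show "lex_less (scons a \<alpha>) (scons b \<beta>)"
  proof
    assume "a = b \<and> lex_less \<alpha> \<beta>"
    then obtain n where "a = b" "\<forall>m<n. \<alpha> m = \<beta> m" "\<alpha> n < \<beta> n"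
      unfolding lex_less_def by blast
    then show ?thesis
      unfolding lex_less_def by (intro exI[of _ "Suc n"]) (auto simp: scons_def)
  qed (auto simp: lex_less_def intro: exI[of _ 0])
qed

section \<open>Elements of \<open>F\<^sub>d\<close> given by prefix replacements\<close>

definition prefix_partition :: "nat \<Rightarrow> nat list set \<Rightarrow> bool" where
  "prefix_partition d P \<longleftrightarrow>
     finite P \<and> P \<subseteq> words d \<and> (\<forall>\<kappa>\<in>bdry d. \<exists>!p. p \<in> P \<and> \<kappa> \<in> cone d p)"

definition prefix_replacement ::
    "nat \<Rightarrow> nat list set \<Rightarrow> (nat list \<Rightarrow> nat list) \<Rightarrow> (nat \<Rightarrow> nat) \<Rightarrow> nat \<Rightarrow> nat" where
  "prefix_replacement d P \<sigma> =
     (\<lambda>\<kappa>\<in>bdry d. let p = THE p. p \<in> P \<and> \<kappa> \<in> cone d p in hcone (\<sigma> p) (sdrop (length p) \<kappa>))"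

definition tree_pair :: "nat \<Rightarrow> nat list set \<Rightarrow> (nat list \<Rightarrow> nat list) \<Rightarrow> bool" where
  "tree_pair d P \<sigma> \<longleftrightarrow> prefix_partition d P \<and> prefix_partition d (\<sigma> ` P) \<and> inj_on \<sigma> P \<and>
     (\<forall>p\<in>P. \<forall>p'\<in>P. \<forall>\<rho>\<in>bdry d. \<forall>\<rho>'\<in>bdry d.
        lex_less (hcone p \<rho>) (hcone p' \<rho>') \<longrightarrow> lex_less (hcone (\<sigma> p) \<rho>) (hcone (\<sigma> p') \<rho>'))"

lemma prefix_partition_words: "prefix_partition d P \<Longrightarrow> p \<in> P \<Longrightarrow> p \<in> words d"
  unfolding prefix_partition_def by blast

lemma prefix_partition_covers: "prefix_partition d P \<Longrightarrow> \<kappa> \<in> bdry d \<Longrightarrow> \<exists>p\<in>P. \<kappa> \<in> cone d p"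
  unfolding prefix_partition_def by blast

lemma prefix_partition_unique:
  "prefix_partition d P \<Longrightarrow> p \<in> P \<Longrightarrow> p' \<in> P \<Longrightarrow> \<kappa> \<in> cone d p \<Longrightarrow> \<kappa> \<in> cone d p' \<Longrightarrow> p = p'"
  unfolding prefix_partition_def using cone_subset_bdry by blast

lemma prefix_partition_the:
  assumes "prefix_partition d P" "p \<in> P" "\<kappa> \<in> cone d p"
  shows "(THE p. p \<in> P \<and> \<kappa> \<in> cone d p) = p"
  using assms prefix_partition_unique by blast

lemma prefix_partition_obtain:
  assumes "prefix_partition d P" "\<kappa> \<in> bdry d"
  obtains p \<rho> where "p \<in> P" "\<rho> \<in> bdry d" "\<kappa> = hcone p \<rho>"
  using prefix_partition_covers[OF assms] hcone_sdrop sdrop_in_bdry[OF assms(2)] by metis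

lemma prefix_replacement_hcone:
  assumes P: "prefix_partition d P" and "p \<in> P" "\<rho> \<in> bdry d"
  shows "prefix_replacement d P \<sigma> (hcone p \<rho>) = hcone (\<sigma> p) \<rho>"
proof -
  have "hcone p \<rho> \<in> cone d p"
    using assms by (simp add: hcone_in_cone prefix_partition_words)
  then show ?thesis
    unfolding prefix_replacement_def
    using prefix_partition_the[OF P \<open>p \<in> P\<close>] cone_subset_bdry by auto
qed

lemma prefix_replacement_Bij:
  assumes "tree_pair d P \<sigma>"
  shows "prefix_replacement d P \<sigma> \<in> Bij (bdry d)"
proof -
  let ?f = "prefix_replacement d P \<sigma>"
  have P: "prefix_partition d P" and Q: "prefix_partition d (\<sigma> ` P)" and inj: "inj_on \<sigma> P"
    using assms by (auto simp: tree_pair_def)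
  have image: "?f ` bdry d = bdry d"
  proof (intro equalityI subsetI)
    fix \<mu> assume "\<mu> \<in> ?f ` bdry d"
    then obtain p \<rho> where "p \<in> P" "\<rho> \<in> bdry d" "\<mu> = ?f (hcone p \<rho>)"
      using prefix_partition_obtain[OF P] by blast
    then show "\<mu> \<in> bdry d"
      using prefix_replacement_hcone[OF P] hcone_in_bdry prefix_partition_words[OF Q] by auto
  next
    fix \<mu> assume "\<mu> \<in> bdry d"
    then obtain p \<rho> where "p \<in> P" "\<rho> \<in> bdry d" "\<mu> = hcone (\<sigma> p) \<rho>"
      using prefix_partition_obtain[OF Q] by blast
    then show "\<mu> \<in> ?f ` bdry d"
      using prefix_replacement_hcone[OF P] hcone_in_bdry prefix_partition_words[OF P]
      by (metis image_eqI)
  qed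
  have "inj_on ?f (bdry d)"
  proof
    fix \<kappa> \<mu> assume "\<kappa> \<in> bdry d" "\<mu> \<in> bdry d" and eq: "?f \<kappa> = ?f \<mu>"
    obtain p \<rho> where p: "p \<in> P" "\<rho> \<in> bdry d" "\<kappa> = hcone p \<rho>"
      using prefix_partition_obtain[OF P \<open>\<kappa> \<in> bdry d\<close>] .
    obtain p' \<rho>' where p': "p' \<in> P" "\<rho>' \<in> bdry d" "\<mu> = hcone p' \<rho>'"
      using prefix_partition_obtain[OF P \<open>\<mu> \<in> bdry d\<close>] .
    have same: "hcone (\<sigma> p) \<rho> = hcone (\<sigma> p') \<rho>'"
      using eq p p' prefix_replacement_hcone[OF P] by simp
    have "\<sigma> p \<in> words d" "\<sigma> p' \<in> words d"
      using p p' prefix_partition_words[OF Q] by auto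
    then have "\<sigma> p = \<sigma> p'"
      using prefix_partition_unique[OF Q] hcone_in_cone p(1,2) p'(1,2) same by (metis imageI)
    then show "\<kappa> = \<mu>"
      using same p p' inj hcone_inj by (metis inj_onD)
  qed
  then show ?thesis
    unfolding Bij_def bij_betw_def using image by (simp add: prefix_replacement_def)
qed

lemma prefix_replacement_lex_less:
  assumes "tree_pair d P \<sigma>" "\<kappa> \<in> bdry d" "\<mu> \<in> bdry d" "lex_less \<kappa> \<mu>"
  shows "lex_less (prefix_replacement d P \<sigma> \<kappa>) (prefix_replacement d P \<sigma> \<mu>)"
proof -
  have P: "prefix_partition d P" using assms(1) by (simp add: tree_pair_def)
  obtain p \<rho> where p: "p \<in> P" "\<rho> \<in> bdry d" "\<kappa> = hcone p \<rho>"
    using prefix_partition_obtain[OF P assms(2)] .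
  obtain p' \<rho>' where p': "p' \<in> P" "\<rho>' \<in> bdry d" "\<mu> = hcone p' \<rho>'"
    using prefix_partition_obtain[OF P assms(3)] .
  show ?thesis
    using assms(1,4) p p' prefix_replacement_hcone[OF P] by (auto simp: tree_pair_def)
qed

lemma prefix_partition_cone_partition:
  assumes P: "prefix_partition d P" and h: "bij_betw h {..<n} P"
  shows "cone_partition d n h"
proof -
  have "(\<Union>i<n. cone d (h i)) = (\<Union>p\<in>P. cone d p)"
    using bij_betw_imp_surj_on[OF h] by auto
  also have "\<dots> = bdry d"
    using prefix_partition_covers[OF P] cone_subset_bdry by blast
  finally show ?thesis
    unfolding cone_partition_def
    using h prefix_partition_words[OF P] prefix_partition_unique[OF P]
    by (auto simp: bij_betw_def inj_on_def)
qed

lemma bact_one: "\<rho> \<in> bdry d \<Longrightarrow> bact (\<one>\<^bsub>AutT d\<^esub>) \<rho> = \<rho>"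
  by (rule ext) (auto simp: bact_def AutT_def BijGroup_def words_def bdry_def simp del: upt_Suc)

lemma prefix_replacement_in_Fd:
  assumes "tree_pair d P \<sigma>"
  shows "prefix_replacement d P \<sigma> \<in> Fd d"
proof -
  have P: "prefix_partition d P" and Q: "prefix_partition d (\<sigma> ` P)" and inj: "inj_on \<sigma> P"
    using assms by (auto simp: tree_pair_def)
  obtain e where e: "bij_betw e {..<card P} P"
    using ex_bij_betw_nat_finite[of P] P by (auto simp: prefix_partition_def lessThan_atLeast0)
  have "bij_betw (\<sigma> \<circ> e) {..<card P} (\<sigma> ` P)"
    using bij_betw_trans[OF e inj_on_imp_bij_betw[OF inj]] .
  moreover have "\<forall>i<card P. \<forall>\<rho>\<in>bdry d. prefix_replacement d P \<sigma> (hcone (e i) \<rho>) =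
      hcone ((\<sigma> \<circ> e) (id i)) (bact (\<one>\<^bsub>AutT d\<^esub>) \<rho>)"
    using prefix_replacement_hcone[OF P] bact_one e bij_betw_apply by fastforce
  ultimately have "prefix_replacement d P \<sigma> \<in> VdG d {\<one>\<^bsub>AutT d\<^esub>}"
    unfolding VdG_def
    using prefix_replacement_Bij[OF assms] prefix_partition_cone_partition[OF P e]
      prefix_partition_cone_partition[OF Q] bij_betw_id
    by (intro CollectI conjI exI[of _ "card P"] exI[of _ e] exI[of _ "\<sigma> \<circ> e"] exI[of _ id]
        exI[of _ "\<lambda>_. \<one>\<^bsub>AutT d\<^esub>"]) auto
  then show ?thesis
    unfolding Fd_def using prefix_replacement_lex_less[OF assms] by blast
qed

section \<open>Copies inside a cone\<close>

definition cons_partition :: "nat \<Rightarrow> nat \<Rightarrow> nat list set \<Rightarrow> nat list set" where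
  "cons_partition d a P = (\<lambda>i. [i]) ` ({1..d} - {a}) \<union> Cons a ` P"

definition cons_map :: "nat \<Rightarrow> (nat list \<Rightarrow> nat list) \<Rightarrow> nat list \<Rightarrow> nat list" where
  "cons_map a \<sigma> p = (case p of [] \<Rightarrow> [] | b # r \<Rightarrow> if b = a then a # \<sigma> r else p)"

lemma cons_map_singleton [simp]: "i \<noteq> a \<Longrightarrow> cons_map a \<sigma> [i] = [i]"
  by (simp add: cons_map_def)

lemma cons_map_Cons [simp]: "cons_map a \<sigma> (a # r) = a # \<sigma> r"
  by (simp add: cons_map_def)

lemma mem_cons_partition_iff:
  "p \<in> cons_partition d a P \<longleftrightarrow> (\<exists>i\<in>{1..d}. i \<noteq> a \<and> p = [i]) \<or> (\<exists>q\<in>P. p = a # q)"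
  unfolding cons_partition_def by auto

lemma prefix_partition_cons_partition:
  assumes P: "prefix_partition d P" and a: "a \<in> {1..d}"
  shows "prefix_partition d (cons_partition d a P)"
proof -
  have "cons_partition d a P \<subseteq> words d"
    using prefix_partition_words[OF P] a by (fastforce simp: cons_partition_def words_def)
  moreover have "\<exists>!q. q \<in> cons_partition d a P \<and> \<kappa> \<in> cone d q" if \<kappa>: "\<kappa> \<in> bdry d" for \<kappa>
  proof (cases "\<kappa> 0 = a")
    case True
    obtain p where "p \<in> P" "stl \<kappa> \<in> cone d p"
      using prefix_partition_covers[OF P stl_in_bdry[OF \<kappa>]] by blast
    then show ?thesis
      using True \<kappa> prefix_partition_unique[OF P]
      by (intro ex1I[of _ "a # p"]) (auto simp: mem_cons_partition_iff mem_cone_Cons_iff)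
  next
    case False
    have "\<kappa> 0 \<in> {1..d}" using \<kappa> by (simp add: bdry_def)
    then show ?thesis
      using False \<kappa> stl_in_bdry
      by (intro ex1I[of _ "[\<kappa> 0]"]) (auto simp: mem_cons_partition_iff mem_cone_Cons_iff)
  qed
  ultimately show ?thesis
    using P by (simp add: prefix_partition_def cons_partition_def)
qed

lemma tree_pair_cons:
  assumes "tree_pair d P \<sigma>" and a: "a \<in> {1..d}"
  shows "tree_pair d (cons_partition d a P) (cons_map a \<sigma>)"
proof -
  have P: "prefix_partition d P" and Q: "prefix_partition d (\<sigma> ` P)" and inj: "inj_on \<sigma> P"
   and ord: "\<forall>p\<in>P. \<forall>p'\<in>P. \<forall>\<rho>\<in>bdry d. \<forall>\<rho>'\<in>bdry d.
       lex_less (hcone p \<rho>) (hcone p' \<rho>') \<longrightarrow> lex_less (hcone (\<sigma> p) \<rho>) (hcone (\<sigma> p') \<rho>')"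
    using assms by (auto simp: tree_pair_def)
  have image: "cons_map a \<sigma> ` cons_partition d a P = cons_partition d a (\<sigma> ` P)"
    unfolding cons_partition_def by (auto simp: image_image image_Un)
  have "inj_on (cons_map a \<sigma>) (cons_partition d a P)"
    using inj by (auto simp: inj_on_def mem_cons_partition_iff)
  moreover have "lex_less (hcone (cons_map a \<sigma> p) \<rho>) (hcone (cons_map a \<sigma> p') \<rho>')"
    if "p \<in> cons_partition d a P" "p' \<in> cons_partition d a P" "\<rho> \<in> bdry d" "\<rho>' \<in> bdry d"
      "lex_less (hcone p \<rho>) (hcone p' \<rho>')" for p p' \<rho> \<rho>'
    using that ord by (auto simp: mem_cons_partition_iff hcone_Cons lex_less_scons_iff; blast)
  ultimately show ?thesis
    unfolding tree_pair_def image
    using prefix_partition_cons_partition[OF P a] prefix_partition_cons_partition[OF Q a] by blast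
qed

lemma prefix_replacement_cons:
  assumes P: "prefix_partition d P" and a: "a \<in> {1..d}" and \<kappa>: "\<kappa> \<in> bdry d"
  shows "prefix_replacement d (cons_partition d a P) (cons_map a \<sigma>) \<kappa> =
           (if \<kappa> 0 = a then scons a (prefix_replacement d P \<sigma> (stl \<kappa>)) else \<kappa>)"
proof -
  have P': "prefix_partition d (cons_partition d a P)"
    by (rule prefix_partition_cons_partition[OF P a])
  show ?thesis
  proof (cases "\<kappa> 0 = a")
    case True
    obtain p \<rho> where p: "p \<in> P" "\<rho> \<in> bdry d" "stl \<kappa> = hcone p \<rho>"
      using prefix_partition_obtain[OF P stl_in_bdry[OF \<kappa>]] .
    then have \<kappa>_eq: "\<kappa> = hcone (a # p) \<rho>"
      using True by (metis hcone_Cons scons_stl)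
    have "a # p \<in> cons_partition d a P"
      using p(1) by (simp add: cons_partition_def)
    then have "prefix_replacement d (cons_partition d a P) (cons_map a \<sigma>) \<kappa> =
        hcone (cons_map a \<sigma> (a # p)) \<rho>"
      unfolding \<kappa>_eq by (rule prefix_replacement_hcone[OF P' _ p(2)])
    then show ?thesis
      using True p prefix_replacement_hcone[OF P] by (simp add: hcone_Cons)
  next
    case False
    have "\<kappa> 0 \<in> {1..d}" using \<kappa> by (simp add: bdry_def)
    then have "\<kappa> = hcone [\<kappa> 0] (stl \<kappa>)" "[\<kappa> 0] \<in> cons_partition d a P"
      using False by (simp_all add: hcone_Cons scons_stl cons_partition_def)
    then show ?thesis
      using False prefix_replacement_hcone[OF P' _ stl_in_bdry[OF \<kappa>]] by (metis cons_map_singleton)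
  qed
qed

fun word_partition :: "nat \<Rightarrow> nat list \<Rightarrow> nat list set \<Rightarrow> nat list set" where
  "word_partition d [] P = P"
| "word_partition d (a # u) P = cons_partition d a (word_partition d u P)"

fun word_map :: "nat list \<Rightarrow> (nat list \<Rightarrow> nat list) \<Rightarrow> nat list \<Rightarrow> nat list" where
  "word_map [] \<sigma> = \<sigma>"
| "word_map (a # u) \<sigma> = cons_map a (word_map u \<sigma>)"

lemma tree_pair_word:
  "tree_pair d P \<sigma> \<Longrightarrow> u \<in> words d \<Longrightarrow> tree_pair d (word_partition d u P) (word_map u \<sigma>)"
  by (induction u) (auto simp: Cons_in_words_iff tree_pair_cons)

definition local_replacement ::
    "nat \<Rightarrow> nat list \<Rightarrow> nat list set \<Rightarrow> (nat list \<Rightarrow> nat list) \<Rightarrow> (nat \<Rightarrow> nat) \<Rightarrow> nat \<Rightarrow> nat" where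
  "local_replacement d u P \<sigma> = prefix_replacement d (word_partition d u P) (word_map u \<sigma>)"

lemma local_replacement_in_Fd:
  "tree_pair d P \<sigma> \<Longrightarrow> u \<in> words d \<Longrightarrow> local_replacement d u P \<sigma> \<in> Fd d"
  unfolding local_replacement_def by (rule prefix_replacement_in_Fd[OF tree_pair_word])

lemma local_replacement_Cons:
  assumes "tree_pair d P \<sigma>" "a \<in> {1..d}" "u \<in> words d" "\<kappa> \<in> bdry d"
  shows "local_replacement d (a # u) P \<sigma> \<kappa> =
           (if \<kappa> 0 = a then scons a (local_replacement d u P \<sigma> (stl \<kappa>)) else \<kappa>)"
  using prefix_replacement_cons[OF _ assms(2,4)] tree_pair_word[OF assms(1,3)]
  by (simp add: local_replacement_def tree_pair_def)

lemma local_replacement_outside: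
  assumes "tree_pair d P \<sigma>" "u \<in> words d" "\<kappa> \<in> bdry d" "\<kappa> \<notin> cone d u"
  shows "local_replacement d u P \<sigma> \<kappa> = \<kappa>"
  using assms(2-)
proof (induction u arbitrary: \<kappa>)
  case (Cons a u)
  then show ?case
    using local_replacement_Cons[OF assms(1)] stl_in_bdry scons_stl
    by (auto simp: Cons_in_words_iff mem_cone_Cons_iff)
qed simp

lemma local_replacement_hcone:
  assumes "tree_pair d P \<sigma>" "u \<in> words d" "\<rho> \<in> bdry d"
  shows "local_replacement d u P \<sigma> (hcone u \<rho>) = hcone u (prefix_replacement d P \<sigma> \<rho>)"
  using assms(2)
proof (induction u)
  case Nil
  then show ?case by (simp add: local_replacement_def)
next
  case (Cons a u)
  then have "a \<in> {1..d}" "u \<in> words d" "hcone (a # u) \<rho> \<in> bdry d"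
    using hcone_in_bdry[OF _ assms(3)] by (auto simp: Cons_in_words_iff)
  then show ?case
    using Cons.IH local_replacement_Cons[OF assms(1)] by (simp add: hcone_Cons)
qed

section \<open>The generator \<open>x\<^sub>0\<close>\<close>

definition singletons :: "nat \<Rightarrow> nat list set" where
  "singletons d = (\<lambda>i. [i]) ` {1..d}"

lemma prefix_partition_singletons: "d \<ge> 1 \<Longrightarrow> prefix_partition d (singletons d)"
proof -
  assume "d \<ge> 1"
  have "prefix_partition d {[]}"
    by (auto simp: prefix_partition_def words_def)
  moreover have "cons_partition d 1 {[]} = singletons d"
    using \<open>d \<ge> 1\<close> by (auto simp: cons_partition_def singletons_def)
  ultimately show ?thesis
    using prefix_partition_cons_partition[of d "{[]}" 1] \<open>d \<ge> 1\<close> by simp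
qed

definition x0_partition :: "nat \<Rightarrow> nat list set" where
  "x0_partition d = cons_partition d 2 (singletons d)"

definition x0_map :: "nat \<Rightarrow> nat list \<Rightarrow> nat list" where
  "x0_map d p =
     (if p = [1] then [1, 1]
      else if length p = 2 then (if p ! 1 < d then [1, Suc (p ! 1)] else [2])
      else p)"

lemma mem_x0_partition_iff:
  "p \<in> x0_partition d \<longleftrightarrow> (\<exists>i\<in>{1..d}. i \<noteq> 2 \<and> p = [i]) \<or> (\<exists>i\<in>{1..d}. p = [2, i])"
  by (auto simp: x0_partition_def mem_cons_partition_iff singletons_def)

lemma x0_map_image:
  assumes "d \<ge> 2"
  shows "x0_map d ` x0_partition d = cons_partition d 1 (singletons d)"
proof (intro equalityI subsetI)
  fix q assume "q \<in> x0_map d ` x0_partition d"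
  then show "q \<in> cons_partition d 1 (singletons d)"
    using assms
    by (auto simp: mem_x0_partition_iff mem_cons_partition_iff singletons_def x0_map_def)
next
  fix q assume "q \<in> cons_partition d 1 (singletons d)"
  then obtain i where i: "i \<in> {1..d}" and "(i \<noteq> 1 \<and> q = [i]) \<or> q = [1, i]"
    by (auto simp: mem_cons_partition_iff singletons_def)
  then show "q \<in> x0_map d ` x0_partition d"
  proof (elim disjE conjE)
    assume "i \<noteq> 1" "q = [i]"
    then show ?thesis
      using assms i by (intro image_eqI[of _ _ "if i = 2 then [2, d] else [i]"])
        (auto simp: x0_map_def mem_x0_partition_iff)
  next
    assume "q = [1, i]"
    then show ?thesis
      using i by (intro image_eqI[of _ _ "if i = 1 then [1] else [2, i - 1]"])
        (auto simp: x0_map_def mem_x0_partition_iff)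
  qed
qed

lemma tree_pair_x0:
  assumes "d \<ge> 2"
  shows "tree_pair d (x0_partition d) (x0_map d)"
proof -
  have "prefix_partition d (singletons d)"
    using assms by (simp add: prefix_partition_singletons)
  then have "prefix_partition d (x0_partition d)" "prefix_partition d (x0_map d ` x0_partition d)"
    unfolding x0_map_image[OF assms] using assms
    by (auto simp: x0_partition_def intro!: prefix_partition_cons_partition)
  moreover have "inj_on (x0_map d) (x0_partition d)"
    by (auto simp: inj_on_def mem_x0_partition_iff x0_map_def split: if_splits)
  moreover have "lex_less (hcone (x0_map d p) \<rho>) (hcone (x0_map d p') \<rho>')"
    if "p \<in> x0_partition d" "p' \<in> x0_partition d" "lex_less (hcone p \<rho>) (hcone p' \<rho>')"
    for p p' \<rho> \<rho>'
    using that(1,2)[unfolded mem_x0_partition_iff] that(3)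
    by (elim disjE bexE conjE) (auto simp: x0_map_def hcone_Cons lex_less_scons_iff)
  ultimately show ?thesis
    unfolding tree_pair_def by blast
qed

section \<open>Groups of bijections\<close>

lemma Bij_apply_mem: "f \<in> Bij S \<Longrightarrow> z \<in> S \<Longrightarrow> f z \<in> S"
  by (meson Bij_imp_funcset funcset_mem)

lemma Bij_inj_on: "f \<in> Bij S \<Longrightarrow> inj_on f S"
  by (simp add: Bij_def bij_betw_def)

lemma BijGroup_mult_apply:
  "f \<in> Bij S \<Longrightarrow> g \<in> Bij S \<Longrightarrow> z \<in> S \<Longrightarrow> (f \<otimes>\<^bsub>BijGroup S\<^esub> g) z = f (g z)"
  by (simp add: BijGroup_def compose_def)

lemma BijGroup_mult_in_Bij: "f \<in> Bij S \<Longrightarrow> g \<in> Bij S \<Longrightarrow> f \<otimes>\<^bsub>BijGroup S\<^esub> g \<in> Bij S"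
  by (simp add: BijGroup_def compose_Bij)

lemma BijGroup_inv_in_Bij: "f \<in> Bij S \<Longrightarrow> inv\<^bsub>BijGroup S\<^esub> f \<in> Bij S"
  by (simp add: inv_BijGroup restrict_inv_into_Bij)

lemma BijGroup_inv_apply: "f \<in> Bij S \<Longrightarrow> y \<in> S \<Longrightarrow> (inv\<^bsub>BijGroup S\<^esub> f) (f y) = y"
  using inv_into_f_f[of f S y] by (simp add: inv_BijGroup Bij_apply_mem Bij_def bij_betw_def)

lemma BijGroup_apply_inv: "f \<in> Bij S \<Longrightarrow> z \<in> S \<Longrightarrow> f ((inv\<^bsub>BijGroup S\<^esub> f) z) = z"
  using f_inv_into_f[of z f S] by (simp add: inv_BijGroup Bij_def bij_betw_def)

lemma BijGroup_ne_one_moves: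
  assumes "f \<in> Bij S" "f \<noteq> \<one>\<^bsub>BijGroup S\<^esub>"
  obtains z where "z \<in> S" "f z \<noteq> z"
  using assms extensionalityI[OF Bij_imp_extensional[OF assms(1)], of "\<lambda>z\<in>S. z"]
  by (force simp: BijGroup_def)

lemma BijGroup_commutator_apply:
  assumes "a \<in> Bij S" "b \<in> Bij S" "z \<in> S"
  shows "(a \<otimes>\<^bsub>BijGroup S\<^esub> b \<otimes>\<^bsub>BijGroup S\<^esub> inv\<^bsub>BijGroup S\<^esub> a \<otimes>\<^bsub>BijGroup S\<^esub>
            inv\<^bsub>BijGroup S\<^esub> b) z =
         a (b ((inv\<^bsub>BijGroup S\<^esub> a) ((inv\<^bsub>BijGroup S\<^esub> b) z)))"
proof -
  have "inv\<^bsub>BijGroup S\<^esub> a \<in> Bij S" "inv\<^bsub>BijGroup S\<^esub> b \<in> Bij S"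
    using assms by (simp_all add: BijGroup_inv_in_Bij)
  with assms show ?thesis
    by (simp only: BijGroup_mult_apply BijGroup_mult_in_Bij Bij_apply_mem)
qed

lemma BijGroup_commutator_fixes:
  assumes "a \<in> Bij S" "b \<in> Bij S" "\<mu> \<in> S" "a \<mu> = \<mu>" "b \<mu> = \<mu>"
  shows "(a \<otimes>\<^bsub>BijGroup S\<^esub> b \<otimes>\<^bsub>BijGroup S\<^esub> inv\<^bsub>BijGroup S\<^esub> a \<otimes>\<^bsub>BijGroup S\<^esub>
            inv\<^bsub>BijGroup S\<^esub> b) \<mu> = \<mu>"
proof -
  have "(inv\<^bsub>BijGroup S\<^esub> a) \<mu> = \<mu>" "(inv\<^bsub>BijGroup S\<^esub> b) \<mu> = \<mu>"
    using BijGroup_inv_apply[OF assms(1,3)] BijGroup_inv_apply[OF assms(2,3)] assms(4,5) by simp_all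
  then show ?thesis
    using BijGroup_commutator_apply[OF assms(1-3)] assms(4,5) by simp
qed

lemma BijGroup_commutator_moves:
  assumes a: "a \<in> Bij S" and b: "b \<in> Bij S" and \<nu>: "\<nu> \<in> S" "b \<nu> = \<nu>" "b (a \<nu>) \<noteq> a \<nu>"
  shows "(a \<otimes>\<^bsub>BijGroup S\<^esub> b \<otimes>\<^bsub>BijGroup S\<^esub> inv\<^bsub>BijGroup S\<^esub> a \<otimes>\<^bsub>BijGroup S\<^esub>
            inv\<^bsub>BijGroup S\<^esub> b) (b (a \<nu>)) \<noteq> b (a \<nu>)"
proof -
  have "a \<nu> \<in> S" "b (a \<nu>) \<in> S"
    using a b \<nu>(1) by (simp_all add: Bij_apply_mem)
  then show ?thesis
    using BijGroup_commutator_apply[OF a b] BijGroup_inv_apply[OF b] BijGroup_inv_apply[OF a \<nu>(1)] \<nu>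
    by simp
qed

lemma BijGroup_conj_apply:
  assumes "c \<in> Bij S" "x \<in> Bij S" "z \<in> S"
  shows "(c \<otimes>\<^bsub>BijGroup S\<^esub> x \<otimes>\<^bsub>BijGroup S\<^esub> inv\<^bsub>BijGroup S\<^esub> c) (c z) = c (x z)"
proof -
  have "inv\<^bsub>BijGroup S\<^esub> c \<in> Bij S" "c z \<in> S"
    using assms by (simp_all add: BijGroup_inv_in_Bij Bij_apply_mem)
  with assms show ?thesis
    by (simp only: BijGroup_mult_apply BijGroup_mult_in_Bij BijGroup_inv_apply)
qed

lemma Bij_fixing_complement_maps_into:
  assumes "f \<in> Bij S" "\<forall>\<mu>\<in>S - W. f \<mu> = \<mu>" "z \<in> S" "z \<in> W"
  shows "f z \<in> W"
proof (rule ccontr)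
  assume "f z \<notin> W"
  moreover have "f z \<in> S"
    using assms(1,3) by (rule Bij_apply_mem)
  ultimately have "f (f z) = f z"
    using assms(2) by simp
  then have "f z = z"
    using Bij_inj_on[OF assms(1)] \<open>f z \<in> S\<close> assms(3) by (simp add: inj_on_eq_iff)
  then show False
    using \<open>f z \<notin> W\<close> assms(4) by simp
qed

lemma BijGroup_conj_inj_on_supported:
  assumes x: "x \<in> Bij S" and displaced: "\<forall>\<mu>\<in>S \<inter> W. x \<mu> \<notin> W"
    and C: "C \<subseteq> Bij S" "\<forall>c\<in>C. \<forall>\<mu>\<in>S - W. c \<mu> = \<mu>"
  shows "inj_on (\<lambda>c. c \<otimes>\<^bsub>BijGroup S\<^esub> x \<otimes>\<^bsub>BijGroup S\<^esub> inv\<^bsub>BijGroup S\<^esub> c) C"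
proof (rule inj_onI)
  let ?conj = "\<lambda>c. c \<otimes>\<^bsub>BijGroup S\<^esub> x \<otimes>\<^bsub>BijGroup S\<^esub> inv\<^bsub>BijGroup S\<^esub> c"
  fix c c' assume "c \<in> C" "c' \<in> C" and eq: "?conj c = ?conj c'"
  then have c: "c \<in> Bij S" "\<forall>\<mu>\<in>S - W. c \<mu> = \<mu>" and c': "c' \<in> Bij S" "\<forall>\<mu>\<in>S - W. c' \<mu> = \<mu>"
    using C by auto
  have "c \<pi> = c' \<pi>" if \<pi>: "\<pi> \<in> S" for \<pi>
  proof (cases "\<pi> \<in> W")
    case False
    then show ?thesis using c c' \<pi> by simp
  next
    case True
    define \<theta> where "\<theta> = (inv\<^bsub>BijGroup S\<^esub> c') (c \<pi>)"
    have "c \<pi> \<in> S"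
      using c(1) \<pi> by (rule Bij_apply_mem)
    then have \<theta>: "\<theta> \<in> S" "c' \<theta> = c \<pi>"
      unfolding \<theta>_def using c'(1) by (simp_all add: Bij_apply_mem BijGroup_inv_in_Bij BijGroup_apply_inv)
    have "\<theta> \<in> W"
    proof (rule ccontr)
      assume "\<theta> \<notin> W"
      then have "c \<pi> = \<theta>"
        using c'(2) \<theta> by simp
      moreover have "c \<pi> \<in> W"
        using Bij_fixing_complement_maps_into[OF c \<pi> True] .
      ultimately show False
        using \<open>\<theta> \<notin> W\<close> by simp
    qed
    have "x \<pi> = c (x \<pi>)"
      using c(2) displaced Bij_apply_mem[OF x \<pi>] \<pi> True by simp
    also have "\<dots> = ?conj c (c \<pi>)"
      by (rule BijGroup_conj_apply[OF c(1) x \<pi>, symmetric])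
    also have "\<dots> = ?conj c' (c' \<theta>)"
      by (simp only: eq \<theta>(2))
    also have "\<dots> = c' (x \<theta>)"
      by (rule BijGroup_conj_apply[OF c'(1) x \<theta>(1)])
    also have "\<dots> = x \<theta>"
      using c'(2) displaced Bij_apply_mem[OF x \<theta>(1)] \<theta>(1) \<open>\<theta> \<in> W\<close> by simp
    finally have "\<pi> = \<theta>"
      using Bij_inj_on[OF x] \<pi> \<theta>(1) by (simp add: inj_on_eq_iff)
    then show ?thesis
      using \<theta>(2) by simp
  qed
  then show "c = c'"
    using Bij_imp_extensional c(1) c'(1) by (blast intro: extensionalityI)
qed

section \<open>Commutators supported in a cone\<close>

lemma Fd_subset_Bij: "Fd d \<subseteq> Bij (bdry d)"
  by (auto simp: Fd_def VdG_def)

lemma derived_set_Fd_subset_Bij: "derived_set (BdryGroup d) (Fd d) \<subseteq> Bij (bdry d)"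
  using group.derived_set_in_carrier[OF group_BijGroup, of "Fd d" "bdry d"] Fd_subset_Bij
  by (simp add: BijGroup_def)

lemma local_x0_hcone:
  assumes d: "d \<ge> 2" and u: "u \<in> words d" and \<rho>: "\<rho> \<in> bdry d"
  shows "local_replacement d u (x0_partition d) (x0_map d) (hcone u (hcone [2, 1] \<rho>)) =
           hcone u (hcone [1, 2] \<rho>)"
proof -
  have x0: "tree_pair d (x0_partition d) (x0_map d)"
    using d by (rule tree_pair_x0)
  have "hcone [2, 1] \<rho> \<in> bdry d"
    using d \<rho> by (simp add: hcone_in_bdry words_def)
  moreover have "prefix_replacement d (x0_partition d) (x0_map d) (hcone [2, 1] \<rho>) = hcone [1, 2] \<rho>"
    using prefix_replacement_hcone[OF _ _ \<rho>] x0 d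
    by (simp add: tree_pair_def mem_x0_partition_iff x0_map_def numeral_2_eq_2)
  ultimately show ?thesis
    using local_replacement_hcone[OF x0 u] by simp
qed

lemma derived_set_Fd_moves_inside_cone:
  assumes d: "d \<ge> 2" and u: "u \<in> words d"
  obtains c where "c \<in> derived_set (BdryGroup d) (Fd d)" "\<forall>\<mu>\<in>bdry d - cone d u. c \<mu> = \<mu>"
    "\<exists>\<pi>\<in>cone d u. c \<pi> \<noteq> \<pi>"
proof -
  let ?G = "BdryGroup d"
  have x0: "tree_pair d (x0_partition d) (x0_map d)"
    using d by (rule tree_pair_x0)
  have u1: "u @ [1] \<in> words d"
    using u d by (simp add: append_in_words_iff words_def)
  define a where "a = local_replacement d u (x0_partition d) (x0_map d)"
  define b where "b = local_replacement d (u @ [1]) (x0_partition d) (x0_map d)"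
  have "a \<in> Fd d" "b \<in> Fd d"
    unfolding a_def b_def using local_replacement_in_Fd[OF x0] u u1 by auto
  then have a: "a \<in> Bij (bdry d)" and b: "b \<in> Bij (bdry d)"
    using Fd_subset_Bij by auto
  define \<rho> :: "nat \<Rightarrow> nat" where "\<rho> = (\<lambda>_. 1)"
  have \<rho>: "\<rho> \<in> bdry d"
    using d by (simp add: \<rho>_def bdry_def)
  then have \<rho>': "hcone [1] \<rho> \<in> bdry d" "hcone [1, 2] \<rho> \<in> bdry d"
    using d by (simp_all add: hcone_in_bdry words_def)
  text \<open>\<open>a\<close> maps \<open>\<nu> = u 2 1 1 \<dots>\<close> to \<open>u 1 2 1 \<dots>\<close>, which \<open>b\<close> moves to \<open>u 1 1 2 \<dots>\<close>.\<close>
  define \<nu> where "\<nu> = hcone u (hcone [2, 1] (hcone [1] \<rho>))"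
  have \<nu>: "\<nu> \<in> bdry d"
    unfolding \<nu>_def using u \<rho>'(1) d by (simp add: hcone_in_bdry words_def)
  have a\<nu>: "a \<nu> = hcone (u @ [1]) (hcone [2, 1] \<rho>)"
    unfolding a_def \<nu>_def local_x0_hcone[OF d u \<rho>'(1)] by (simp add: hcone_append hcone_Cons)
  have "\<nu> (length u) = 2"
    by (simp add: \<nu>_def hcone_def)
  then have "\<nu> \<notin> cone d (u @ [1])"
    by (auto simp: mem_cone_iff)
  then have b\<nu>: "b \<nu> = \<nu>"
    unfolding b_def using local_replacement_outside[OF x0 u1 \<nu>] by simp
  have ba\<nu>: "b (a \<nu>) = hcone (u @ [1]) (hcone [1, 2] \<rho>)"
    unfolding a\<nu> b_def by (rule local_x0_hcone[OF d u1 \<rho>])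
  have "b (a \<nu>) \<noteq> a \<nu>"
  proof
    assume "b (a \<nu>) = a \<nu>"
    then have "hcone [1, 2] \<rho> = hcone [2, 1] \<rho>"
      unfolding a\<nu> ba\<nu>[unfolded a\<nu>] by (rule hcone_inj)
    then have "hcone [1, 2] \<rho> 0 = hcone [2, 1] \<rho> 0"
      by simp
    then show False
      by (simp add: hcone_Cons)
  qed
  define c where "c = a \<otimes>\<^bsub>?G\<^esub> b \<otimes>\<^bsub>?G\<^esub> inv\<^bsub>?G\<^esub> a \<otimes>\<^bsub>?G\<^esub> inv\<^bsub>?G\<^esub> b"
  have "c \<in> derived_set ?G (Fd d)"
    unfolding c_def by (rule UN_I[OF \<open>a \<in> Fd d\<close>], rule UN_I[OF \<open>b \<in> Fd d\<close>]) simp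
  moreover have "c \<mu> = \<mu>" if "\<mu> \<in> bdry d - cone d u" for \<mu>
    unfolding c_def a_def b_def using that cone_append_subset
    by (intro BijGroup_commutator_fixes[OF a[unfolded a_def] b[unfolded b_def]]
        local_replacement_outside[OF x0 u] local_replacement_outside[OF x0 u1]) auto
  moreover have "b (a \<nu>) \<in> cone d u"
    unfolding ba\<nu> using hcone_in_cone[OF u1 \<rho>'(2)] cone_append_subset by blast
  moreover have "c (b (a \<nu>)) \<noteq> b (a \<nu>)"
    unfolding c_def using BijGroup_commutator_moves[OF a b \<nu> b\<nu>] \<open>b (a \<nu>) \<noteq> a \<nu>\<close> .
  ultimately show ?thesis
    using that by blast
qed

lemma cone_replicate_disjoint:
  assumes "k \<noteq> l"
  shows "cone d (w @ replicate k 1 @ [2]) \<inter> cone d (w @ replicate l 1 @ [2]) = {}"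
proof -
  have "(w @ replicate k 1 @ [2]) ! (length w + min k l) \<noteq>
        (w @ replicate l 1 @ [2]) ! (length w + min k l)"
    using assms by (cases "k < l") (auto simp: nth_append min_def)
  then show ?thesis
    by (intro cone_disjoint_if_nth_neq[of "length w + min k l"]) (auto simp: min_def)
qed

lemma infinite_derived_set_Fd_supported_in_cone:
  assumes d: "d \<ge> 2" and w: "w \<in> words d"
  shows "infinite {c \<in> derived_set (BdryGroup d) (Fd d). \<forall>\<mu>\<in>bdry d - cone d w. c \<mu> = \<mu>}"
proof -
  define D where "D = derived_set (BdryGroup d) (Fd d)"
  define u where "u k = w @ replicate k 1 @ [2]" for k
  have u: "u k \<in> words d" for k
    unfolding u_def using w d by (auto simp: words_def)
  have "\<exists>c. c \<in> D \<and> (\<forall>\<mu>\<in>bdry d - cone d (u k). c \<mu> = \<mu>) \<and> (\<exists>\<pi>\<in>cone d (u k). c \<pi> \<noteq> \<pi>)"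
    for k
  proof -
    obtain c where "c \<in> D" "\<forall>\<mu>\<in>bdry d - cone d (u k). c \<mu> = \<mu>" "\<exists>\<pi>\<in>cone d (u k). c \<pi> \<noteq> \<pi>"
      using derived_set_Fd_moves_inside_cone[OF d u, folded D_def] .
    then show ?thesis
      by blast
  qed
  then obtain c where c: "\<And>k. c k \<in> D" "\<And>k. \<forall>\<mu>\<in>bdry d - cone d (u k). c k \<mu> = \<mu>"
    "\<And>k. \<exists>\<pi>\<in>cone d (u k). c k \<pi> \<noteq> \<pi>"
    by metis
  have "inj c"
  proof
    fix k l assume "c k = c l"
    obtain \<pi> where \<pi>: "\<pi> \<in> cone d (u k)" "c k \<pi> \<noteq> \<pi>"
      using c(3) by blast
    show "k = l"
    proof (rule ccontr)
      assume "k \<noteq> l"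
      then have "\<pi> \<in> bdry d - cone d (u l)"
        using cone_replicate_disjoint \<pi>(1) cone_subset_bdry unfolding u_def by blast
      then show False
        using c(2)[of l] \<pi>(2) \<open>c k = c l\<close> by simp
    qed
  qed
  moreover have "range c \<subseteq> {c \<in> D. \<forall>\<mu>\<in>bdry d - cone d w. c \<mu> = \<mu>}"
    using c(1,2) cone_append_subset[of d w] unfolding u_def by blast
  ultimately show ?thesis
    unfolding D_def[symmetric] by (meson finite_imageD finite_subset infinite_UNIV_nat)
qed

section \<open>Elements of \<open>V\<^sub>d(G)\<close> displace a cone\<close>

lemma bact_cong: "(\<And>m. m \<le> n \<Longrightarrow> \<kappa> m = \<mu> m) \<Longrightarrow> bact g \<kappa> n = bact g \<mu> n"
proof -
  assume "\<And>m. m \<le> n \<Longrightarrow> \<kappa> m = \<mu> m"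
  then have "map \<kappa> [0..<Suc n] = map \<mu> [0..<Suc n]"
    by (intro map_cong) auto
  then show ?thesis
    unfolding bact_def by (rule arg_cong[where f = "\<lambda>l. g l ! n"])
qed

lemma VdG_coordinate_locally_constant:
  assumes x: "x \<in> VdG d G" and \<kappa>: "\<kappa> \<in> bdry d"
  obtains L where "\<forall>\<mu>\<in>bdry d. (\<forall>m<L. \<mu> m = \<kappa> m) \<longrightarrow> x \<mu> n = x \<kappa> n"
proof -
  obtain k wp wm j g where cp: "cone_partition d k wp" and "cone_partition d k wm"
    and act: "\<forall>i<k. \<forall>\<rho>\<in>bdry d. x (hcone (wp i) \<rho>) = hcone (wm (j i)) (bact (g i) \<rho>)"
    using x unfolding VdG_def by blast
  have "\<kappa> \<in> (\<Union>i<k. cone d (wp i))"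
    using \<kappa> cp unfolding cone_partition_def by simp
  then obtain i where "i < k" and \<kappa>_cone: "\<kappa> \<in> cone d (wp i)"
    by blast
  define p where "p = wp i"
  define h where "h = bact (g i)"
  have x_eq: "x \<mu> = hcone (wm (j i)) (h (sdrop (length p) \<mu>))" if "\<mu> \<in> cone d p" for \<mu>
  proof -
    have "sdrop (length p) \<mu> \<in> bdry d"
      using that cone_subset_bdry sdrop_in_bdry by blast
    then have "x (hcone p (sdrop (length p) \<mu>)) = hcone (wm (j i)) (h (sdrop (length p) \<mu>))"
      using act \<open>i < k\<close> unfolding p_def h_def by blast
    then show ?thesis
      unfolding hcone_sdrop[OF that] .
  qed
  have "x \<mu> n = x \<kappa> n" if \<mu>: "\<mu> \<in> bdry d" "\<forall>m<length p + Suc n. \<mu> m = \<kappa> m" for \<mu>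
  proof -
    have "\<mu> \<in> cone d p"
      using \<mu> \<kappa>_cone unfolding p_def mem_cone_iff by simp
    moreover have "h (sdrop (length p) \<mu>) t = h (sdrop (length p) \<kappa>) t" if "t \<le> n" for t
      unfolding h_def using \<mu>(2) that by (intro bact_cong) (simp add: sdrop_def)
    ultimately show ?thesis
      using x_eq \<kappa>_cone unfolding p_def by (simp add: hcone_def)
  qed
  then show ?thesis
    using that by blast
qed

lemma VdG_displaces_cone:
  assumes x: "x \<in> VdG d G" "x \<noteq> \<one>\<^bsub>BdryGroup d\<^esub>"
  obtains w where "w \<in> words d" "\<forall>\<mu>\<in>cone d w. x \<mu> \<notin> cone d w"
proof -
  have "x \<in> Bij (bdry d)"
    using x(1) by (simp add: VdG_def)
  then obtain \<kappa> where \<kappa>: "\<kappa> \<in> bdry d" and "x \<kappa> \<noteq> \<kappa>"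
    using BijGroup_ne_one_moves x(2) by blast
  then obtain N where N: "x \<kappa> N \<noteq> \<kappa> N"
    by blast
  obtain L where L: "\<forall>\<mu>\<in>bdry d. (\<forall>m<L. \<mu> m = \<kappa> m) \<longrightarrow> x \<mu> N = x \<kappa> N"
    using VdG_coordinate_locally_constant[OF x(1) \<kappa>] .
  define w where "w = map \<kappa> [0..<max L (Suc N)]"
  have "w \<in> words d"
    using \<kappa> by (auto simp: w_def words_def bdry_def)
  moreover have "x \<mu> \<notin> cone d w" if "\<mu> \<in> cone d w" for \<mu>
  proof
    assume "x \<mu> \<in> cone d w"
    then have "x \<mu> N = \<kappa> N"
      by (simp add: mem_cone_iff w_def)
    moreover have "x \<mu> N = x \<kappa> N"
      using L that by (simp add: mem_cone_iff w_def)
    ultimately show False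
      using N by simp
  qed
  ultimately show ?thesis
    using that by blast
qed

lemma derived_set_subset_derived: "derived_set G H \<subseteq> derived G H"
  unfolding derived_def by (rule subsetI, rule generate.incl)

theorem mainTheorem9:
  fixes d :: nat and G :: "(nat list \<Rightarrow> nat list) set"
  assumes "d \<ge> 2" and "self_similar d G"
  shows "\<forall>x \<in> VdG d G. x \<noteq> \<one>\<^bsub>BdryGroup d\<^esub> \<longrightarrow>
           infinite {c \<otimes>\<^bsub>BdryGroup d\<^esub> x \<otimes>\<^bsub>BdryGroup d\<^esub> inv\<^bsub>BdryGroup d\<^esub> c | c.
                     c \<in> derived (BdryGroup d) (Fd d)}"
proof (intro ballI impI)
  let ?G = "BdryGroup d"
  fix x assume x: "x \<in> VdG d G" "x \<noteq> \<one>\<^bsub>?G\<^esub>"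
  let ?conj = "\<lambda>c. c \<otimes>\<^bsub>?G\<^esub> x \<otimes>\<^bsub>?G\<^esub> inv\<^bsub>?G\<^esub> c"
  obtain w where w: "w \<in> words d" "\<forall>\<mu>\<in>cone d w. x \<mu> \<notin> cone d w"
    using VdG_displaces_cone[OF x] .
  define D where "D = derived_set ?G (Fd d)"
  define C where "C = {c \<in> D. \<forall>\<mu>\<in>bdry d - cone d w. c \<mu> = \<mu>}"
  have "infinite C"
    unfolding C_def D_def using infinite_derived_set_Fd_supported_in_cone[OF assms(1) w(1)] .
  moreover have "inj_on ?conj C"
    using BijGroup_conj_inj_on_supported[of x "bdry d" "cone d w" C] x(1) w(2)
      derived_set_Fd_subset_Bij[of d, folded D_def]
    unfolding C_def VdG_def by blast
  moreover have "?conj ` C \<subseteq> {?conj c | c. c \<in> derived ?G (Fd d)}"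
    using derived_set_subset_derived[of ?G "Fd d", folded D_def] unfolding C_def by blast
  ultimately show "infinite {?conj c | c. c \<in> derived ?G (Fd d)}"
    by (meson finite_image_iff finite_subset)
qed

end
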